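(* Let $k \ge 3$ and $q \ge 0$ be integers with $k$ odd, and let $s \in \{0,1,2\}$ be the unique integer satisfying $s \equiv q + \frac{k-3}{2} \pmod 3$. Then, for any integer $n$ such that \[n \ge \max\left\{k,\frac{k^2}{6} + \frac{q-s}{3} k + s - \frac{1}{2}\right\}\] and any function $f:[n]\to \{-1,1\}$ with $|f([n])| \le q$, there is a $k$-block $B\subseteq[n]$ with $|f(B)|=1$.
   Context: $[n]=\{1,\dots,n\}$; $f(Y)=\sum_{y\in Y}f(y)$; a $k$-block is a set of $k$ consecutive integers. *)

theory Defs
  imports Main "HOL.Real"
begin

definition kblock :: "nat \<Rightarrow> nat \<Rightarrow> nat set" where
  "kblock k a = {a..<a+k}"

end

theory Submission
  imports Defs
begin

text \<open>Suppose no \<open>k\<close>-block has sum \<open>\<plusminus>1\<close>. Since \<open>k\<close> is odd every block sum is odd, and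
  sliding a block by one changes its sum by at most 2, so all block sums have the same sign and
  absolute value at least 3; after replacing \<open>f\<close> by \<open>-f\<close> they are all \<open>\<ge> 3\<close>. Write
  \<open>n = m k + r\<close> with \<open>0 \<le> r < k\<close>. Cutting \<open>[n]\<close> into \<open>m\<close> blocks and \<open>r\<close> singletons gives
  \<open>f([n]) \<ge> 3m - r\<close>; cutting it into \<open>m - 1\<close> blocks and a final stretch of length \<open>k + r\<close>,
  covered by two overlapping blocks, gives \<open>f([n]) \<ge> 3(m+1) + r - k\<close>. With
  \<open>k = 2h + 3\<close> and \<open>q + h = 3t + s\<close> the hypothesis on \<open>n\<close> reads \<open>n \<ge> kt + h + 1 + s\<close>,
  and one of the two bounds always exceeds \<open>q\<close>.\<close>

lemma kblock_subset_atLeastAtMost_iff: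
  "0 < k \<Longrightarrow> kblock k a \<subseteq> {1..n} \<longleftrightarrow> 1 \<le> a \<and> a + k \<le> n + 1"
  unfolding kblock_def by (cases k) (auto simp: subset_iff)

lemma sum_kblock_Suc:
  fixes f :: "nat \<Rightarrow> int"
  shows "sum f (kblock k (Suc a)) = sum f (kblock k a) - f a + f (a + k)"
proof -
  have "sum f {a..<Suc (a + k)} = f a + sum f {Suc a..<Suc (a + k)}"
    by (rule sum.atLeast_Suc_lessThan) simp
  moreover have "sum f {a..<Suc (a + k)} = sum f {a..<a + k} + f (a + k)"
    by (rule sum.atLeastLessThan_Suc) simp
  ultimately show ?thesis
    unfolding kblock_def by simp
qed

lemma sum_pm_one_odd_iff:
  fixes f :: "'a \<Rightarrow> int"
  assumes "finite A" and "\<forall>i\<in>A. f i \<in> {-1, 1}"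
  shows "odd (sum f A) \<longleftrightarrow> odd (card A)"
  using assms by (induction A rule: finite_induct) auto

lemma abs_sum_pm_one_le_card:
  fixes f :: "'a \<Rightarrow> int"
  assumes "\<forall>i\<in>A. f i \<in> {-1, 1}"
  shows "\<bar>sum f A\<bar> \<le> int (card A)"
proof -
  have "\<bar>sum f A\<bar> \<le> (\<Sum>i\<in>A. \<bar>f i\<bar>)"
    by (rule sum_abs)
  also have "\<dots> = (\<Sum>i\<in>A. 1)"
    using assms by (intro sum.cong) auto
  finally show ?thesis
    by simp
qed

lemma odd_block_sum:
  fixes f :: "nat \<Rightarrow> int"
  assumes "\<forall>i\<in>{1..n}. f i \<in> {-1, 1}" and "odd k" and "kblock k a \<subseteq> {1..n}"
  shows "odd (sum f (kblock k a))"
  using assms sum_pm_one_odd_iff[of "kblock k a" f] by (auto simp: kblock_def)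

lemma block_sums_ge_3_of_first_pos:
  fixes f :: "nat \<Rightarrow> int"
  assumes pm: "\<forall>i\<in>{1..n}. f i \<in> {-1, 1}" and "odd k"
    and no_unit: "\<And>a. kblock k a \<subseteq> {1..n} \<Longrightarrow> \<bar>sum f (kblock k a)\<bar> \<noteq> 1"
    and first: "0 < sum f (kblock k 1)"
    and block: "kblock k a \<subseteq> {1..n}"
  shows "3 \<le> sum f (kblock k a)"
proof -
  have k: "0 < k"
    using \<open>odd k\<close> by (cases k) auto
  have ge_3: "3 \<le> sum f (kblock k b)" if "kblock k b \<subseteq> {1..n}" "0 < sum f (kblock k b)" for b
    using odd_block_sum[OF pm \<open>odd k\<close> that(1)] no_unit[OF that(1)] that(2)
    by presburger
  have "1 \<le> a"
    using block kblock_subset_atLeastAtMost_iff[OF k] by blast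
  then show ?thesis
    using block
  proof (induction a rule: nat_induct_at_least)
    case base
    then show ?case
      using ge_3 first by blast
  next
    case (Suc a)
    have bounds: "1 \<le> a" "a + k \<le> n"
      using Suc.hyps Suc.prems kblock_subset_atLeastAtMost_iff[OF k, of "Suc a" n] by simp_all
    then have block_a: "kblock k a \<subseteq> {1..n}"
      using kblock_subset_atLeastAtMost_iff[OF k, of a n] by simp
    have "f a \<in> {-1, 1}" "f (a + k) \<in> {-1, 1}"
      using pm bounds by auto
    then have "f a \<le> 1" "-1 \<le> f (a + k)"
      by auto
    then have "0 < sum f (kblock k (Suc a))"
      using Suc.IH[OF block_a] by (simp add: sum_kblock_Suc)
    then show ?case
      using ge_3 Suc.prems by blast
  qed
qed

lemma block_sums_uniform_sign:
  fixes f :: "nat \<Rightarrow> int"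
  assumes pm: "\<forall>i\<in>{1..n}. f i \<in> {-1, 1}" and "odd k" and "k \<le> n"
    and no_unit: "\<And>a. kblock k a \<subseteq> {1..n} \<Longrightarrow> \<bar>sum f (kblock k a)\<bar> \<noteq> 1"
  shows "(\<forall>a. kblock k a \<subseteq> {1..n} \<longrightarrow> 3 \<le> sum f (kblock k a))
    \<or> (\<forall>a. kblock k a \<subseteq> {1..n} \<longrightarrow> 3 \<le> sum (\<lambda>i. - f i) (kblock k a))"
proof -
  have "kblock k 1 \<subseteq> {1..n}"
    using \<open>k \<le> n\<close> by (auto simp: kblock_def)
  then have "sum f (kblock k 1) \<noteq> 0"
    using odd_block_sum[OF pm \<open>odd k\<close>] by fastforce
  then consider "0 < sum f (kblock k 1)" | "0 < sum (\<lambda>i. - f i) (kblock k 1)"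
    by (fastforce simp: sum_negf)
  then show ?thesis
  proof cases
    case 1
    then show ?thesis
      using block_sums_ge_3_of_first_pos[OF pm \<open>odd k\<close> no_unit] by blast
  next
    case 2
    have "\<forall>i\<in>{1..n}. - f i \<in> {-1, 1}"
      using pm by auto
    moreover have "\<bar>sum (\<lambda>i. - f i) (kblock k a)\<bar> \<noteq> 1" if "kblock k a \<subseteq> {1..n}" for a
      using no_unit[OF that] by (simp add: sum_negf)
    ultimately show ?thesis
      using block_sums_ge_3_of_first_pos[OF _ \<open>odd k\<close> _ 2] by blast
  qed
qed

lemma sum_prefix_of_blocks_ge:
  fixes f :: "nat \<Rightarrow> int"
  assumes blocks: "\<And>a. 1 \<le> a \<Longrightarrow> a + k \<le> n + 1 \<Longrightarrow> 3 \<le> sum f (kblock k a)"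
  shows "j * k \<le> n \<Longrightarrow> 3 * int j \<le> sum f {1..<1 + j * k}"
proof (induction j)
  case (Suc j)
  have "sum f {1..<1 + Suc j * k} = sum f {1..<1 + j * k} + sum f (kblock k (1 + j * k))"
    unfolding kblock_def using sum.atLeastLessThan_concat[of 1 "1 + j * k" "1 + j * k + k" f]
    by (simp add: algebra_simps)
  then show ?case
    using Suc blocks[of "1 + j * k"] by simp
qed simp

lemma sum_final_segment_ge:
  fixes f :: "nat \<Rightarrow> int"
  assumes blocks: "\<And>a. 1 \<le> a \<Longrightarrow> a + k \<le> n + 1 \<Longrightarrow> 3 \<le> sum f (kblock k a)"
    and pm: "\<forall>i\<in>{1..n}. f i \<in> {-1, 1}"
    and "1 \<le> a" and "r < k" and span: "a + k + r = n + 1"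
  shows "3 - int r \<le> sum f {a..<a + k + r}"
    and "6 + int r - int k \<le> sum f {a..<a + k + r}"
proof -
  have "\<forall>i\<in>{a + k..<a + k + r}. f i \<in> {-1, 1}" "\<forall>i\<in>{a + r..<a + k}. f i \<in> {-1, 1}"
    using pm \<open>1 \<le> a\<close> span by auto
  then have tail: "- int r \<le> sum f {a + k..<a + k + r}"
    and overlap: "sum f {a + r..<a + k} \<le> int (k - r)"
    using abs_sum_pm_one_le_card by (force simp: abs_le_iff)+
  have first: "3 \<le> sum f {a..<a + k}" and second: "3 \<le> sum f {a + r..<a + r + k}"
    using blocks[of a] blocks[of "a + r"] \<open>1 \<le> a\<close> span by (auto simp: kblock_def)
  have split_first: "sum f {a..<a + k + r} = sum f {a..<a + k} + sum f {a + k..<a + k + r}"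
    by (simp add: sum.atLeastLessThan_concat)
  moreover have "sum f {a..<a + k} = sum f {a..<a + r} + sum f {a + r..<a + k}"
    using \<open>r < k\<close> by (simp add: sum.atLeastLessThan_concat)
  moreover have "sum f {a..<a + k + r} = sum f {a..<a + r} + sum f {a + r..<a + r + k}"
    by (simp add: sum.atLeastLessThan_concat add.commute add.left_commute)
  ultimately show "6 + int r - int k \<le> sum f {a..<a + k + r}"
    using tail overlap first second \<open>r < k\<close> by (simp add: of_nat_diff)
  show "3 - int r \<le> sum f {a..<a + k + r}"
    using split_first tail first by simp
qed

lemma sum_ge_of_block_sums_ge_3:
  fixes f :: "nat \<Rightarrow> int"
  assumes blocks: "\<And>a. 1 \<le> a \<Longrightarrow> a + k \<le> n + 1 \<Longrightarrow> 3 \<le> sum f (kblock k a)"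
    and pm: "\<forall>i\<in>{1..n}. f i \<in> {-1, 1}"
    and "k \<le> n" and "0 < k"
  shows "3 * int (n div k) - int (n mod k) \<le> sum f {1..n}"
    and "3 * int (n div k) + int (n mod k) - int k + 3 \<le> sum f {1..n}"
proof -
  obtain j where j: "n div k = Suc j"
    using \<open>k \<le> n\<close> \<open>0 < k\<close> by (cases "n div k") (auto simp: div_eq_0_iff)
  define r where "r = n mod k"
  have span: "(1 + j * k) + k + r = n + 1"
    using j div_mult_mod_eq[of n k] unfolding r_def by simp
  have prefix: "3 * int j \<le> sum f {1..<1 + j * k}"
    using sum_prefix_of_blocks_ge[OF blocks] span by simp
  have "sum f {1..n} = sum f {1..<1 + j * k} + sum f {1 + j * k..<1 + j * k + k + r}"
    using span sum.atLeastLessThan_concat[of 1 "1 + j * k" "1 + j * k + k + r" f]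
    by (simp add: atLeastLessThanSuc_atLeastAtMost[symmetric])
  then show "3 * int (n div k) - int (n mod k) \<le> sum f {1..n}"
    and "3 * int (n div k) + int (n mod k) - int k + 3 \<le> sum f {1..n}"
    using prefix sum_final_segment_ge[OF blocks pm _ _ span] \<open>0 < k\<close> j
    unfolding r_def by simp_all
qed

lemma block_bounds_exceed_q:
  fixes T :: int and k h q t s n :: nat
  assumes k: "k = 2 * h + 3" and q: "q + h = 3 * t + s" and "s \<le> 2"
    and n: "k * t + h + 1 + s \<le> n"
    and whole_blocks: "3 * int (n div k) - int (n mod k) \<le> T"
    and overlapping_end: "3 * int (n div k) + int (n mod k) - int k + 3 \<le> T"
  shows "int q < T"
proof -
  define m where "m = n div k"
  define r where "r = n mod k"
  have n_eq: "n = m * k + r" and "r < k"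
    unfolding m_def r_def using k div_mult_mod_eq[of n k] by simp_all
  consider "m < t" | "m = t" | "t < m"
    by linarith
  then show ?thesis
  proof cases
    case 1
    then have "(m + 1) * k \<le> t * k"
      by (intro mult_le_mono1) simp
    then show ?thesis
      using n n_eq \<open>r < k\<close> by (simp add: algebra_simps)
  next
    case 2
    then have "h + 1 + s \<le> r"
      using n n_eq by (simp add: algebra_simps)
    then show ?thesis
      using overlapping_end q k 2 unfolding m_def[symmetric] r_def[symmetric] by linarith
  next
    case 3
    then show ?thesis
      using whole_blocks overlapping_end q k \<open>s \<le> 2\<close>
      unfolding m_def[symmetric] r_def[symmetric] by linarith
  qed
qed

lemma threshold_as_nat:
  fixes k h q t s n :: nat
  assumes "k = 2 * h + 3" and "q + h = 3 * t + s"
    and "(real k)^2 / 6 + (real q - real s) / 3 * real k + real s - 1/2 \<le> real n"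
  shows "k * t + h + 1 + s \<le> n"
proof -
  have q: "real q = 3 * real t + real s - real h"
    using arg_cong[OF assms(2), of real] by simp
  have "(real k)^2 / 6 + (real q - real s) / 3 * real k + real s - 1/2 = real (k * t + h + 1 + s)"
    unfolding q using assms(1) by (simp add: power2_eq_square field_simps)
  then show ?thesis
    using assms(3) by linarith
qed

lemma sum_gt_of_block_sums_ge_3:
  fixes f :: "nat \<Rightarrow> int"
  assumes "k = 2 * h + 3" and "q + h = 3 * t + s" and "s \<le> 2" and "k * t + h + 1 + s \<le> n"
    and "k \<le> n" and pm: "\<forall>i\<in>{1..n}. f i \<in> {-1, 1}"
    and blocks: "\<And>a. kblock k a \<subseteq> {1..n} \<Longrightarrow> 3 \<le> sum f (kblock k a)"
  shows "int q < sum f {1..n}"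
proof -
  have "0 < k"
    using assms(1) by simp
  then have "3 \<le> sum f (kblock k a)" if "1 \<le> a" "a + k \<le> n + 1" for a
    using blocks kblock_subset_atLeastAtMost_iff that by blast
  then show ?thesis
    using block_bounds_exceed_q[OF assms(1-4) sum_ge_of_block_sums_ge_3[OF _ pm \<open>k \<le> n\<close> \<open>0 < k\<close>]]
    by blast
qed

theorem corollary2p4:
  fixes k q n :: nat and s :: nat and f :: "nat \<Rightarrow> int"
  assumes "k \<ge> 3" and "odd k"
    and "s = (q + (k - 3) div 2) mod 3"
    and "n \<ge> k"
    and "real n \<ge> (real k)^2 / 6 + (real q - real s) / 3 * real k + real s - 1/2"
    and "\<forall>i\<in>{1..n}. f i \<in> {-1, 1}"
    and "\<bar>\<Sum>i\<in>{1..n}. f i\<bar> \<le> int q"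
  shows "\<exists>a. kblock k a \<subseteq> {1..n} \<and> \<bar>\<Sum>i\<in>kblock k a. f i\<bar> = 1"
proof (rule ccontr)
  assume "\<not> ?thesis"
  then have no_unit: "\<And>a. kblock k a \<subseteq> {1..n} \<Longrightarrow> \<bar>sum f (kblock k a)\<bar> \<noteq> 1"
    by blast
  define h where "h = (k - 3) div 2"
  define t where "t = (q + h) div 3"
  have k: "k = 2 * h + 3"
    using assms(1,2) unfolding h_def by (auto elim!: oddE)
  have qt: "q + h = 3 * t + s" and "s \<le> 2"
    using assms(3) unfolding t_def h_def by simp_all
  have n_large: "k * t + h + 1 + s \<le> n"
    using threshold_as_nat[OF k qt assms(5)] .
  from block_sums_uniform_sign[OF assms(6,2,4) no_unit] show False
  proof
    assume "\<forall>a. kblock k a \<subseteq> {1..n} \<longrightarrow> 3 \<le> sum f (kblock k a)"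
    then have "int q < sum f {1..n}"
      using sum_gt_of_block_sums_ge_3[OF k qt \<open>s \<le> 2\<close> n_large assms(4,6)] by blast
    then show False
      using assms(7) by simp
  next
    assume "\<forall>a. kblock k a \<subseteq> {1..n} \<longrightarrow> 3 \<le> sum (\<lambda>i. - f i) (kblock k a)"
    moreover have "\<forall>i\<in>{1..n}. - f i \<in> {-1, 1}"
      using assms(6) by auto
    ultimately have "int q < sum (\<lambda>i. - f i) {1..n}"
      using sum_gt_of_block_sums_ge_3[OF k qt \<open>s \<le> 2\<close> n_large assms(4), of "\<lambda>i. - f i"] by blast
    then show False
      using assms(7) by (simp add: sum_negf)
  qed
qed

end
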